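(* Let $A,B,C\in\widehat{\mathbb F_q^\times}$ with $A\neq\varepsilon$, $B\ne\varepsilon$, $A\neq C$, $B\neq C$, and let $\lambda\in\mathbb F_q^\times$. Then $$2\,{}_2\mathbb P_1\!\left[\begin{matrix}A&B\\&C\end{matrix};\lambda\right]=ABC(-1)\overline A(\lambda)\,{}_2\mathbb P_1\!\left[\begin{matrix}A&A\overline C\\&A\overline B\end{matrix};\tfrac1\lambda\right]+ABC(-1)\overline B(\lambda)\frac{J(B,\overline BC)}{J(A,\overline AC)}\,{}_2\mathbb P_1\!\left[\begin{matrix}B&B\overline C\\&B\overline A\end{matrix};\tfrac1\lambda\right],$$ and $$2\,{}_2\mathbb F_1\!\left[\begin{matrix}A&B\\&C\end{matrix};\lambda\right]=ABC(-1)\overline A(\lambda)\frac{J(\overline CA,\overline BC)}{J(B,C\overline B)}\,{}_2\mathbb F_1\!\left[\begin{matrix}A&A\overline C\\&A\overline B\end{matrix};\tfrac1\lambda\right]+ABC(-1)\overline B(\lambda)\frac{J(C\overline A,\overline CB)}{J(A,\overline AC)}\,{}_2\mathbb F_1\!\left[\begin{matrix}B&B\overline C\\&B\overline A\end{matrix};\tfrac1\lambda\right].$$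
   Context: $\mathbb F_q$ is a finite field with $q$ elements, $q$ a power of an odd prime $p$. $\widehat{\mathbb F_q^\times}$ is the group of multiplicative characters $\chi:\mathbb F_q^\times\to\mathbb C^\times$; every character, including the trivial character $\varepsilon$, is extended to $\mathbb F_q$ by $\chi(0)=0$. $\overline\chi$ denotes the complex-conjugate (inverse) character, and products of characters are pointwise (e.g. $\overline AC(x)=\overline A(x)C(x)$). Jacobi sum: $J(A,B)=\sum_{x\in\mathbb F_q}A(x)B(1-x)$. Period function: ${}_2\mathbb P_1\!\left[\begin{matrix}A&B\\&C\end{matrix};\lambda\right]=\sum_{y\in\mathbb F_q}B(y)\,\overline BC(1-y)\,\overline A(1-\lambda y)$; normalized function ${}_2\mathbb F_1\!\left[\begin{matrix}A&B\\&C\end{matrix};\lambda\right]=\frac{1}{J(B,C\overline B)}\,{}_2\mathbb P_1\!\left[\begin{matrix}A&B\\&C\end{matrix};\lambda\right]$. *)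

theory Defs
  imports Complex_Main
begin

text \<open>Multiplicative characters of a finite field 'a, extended by chi(0) = 0.
  A function chi : 'a => complex is such a character iff chi 0 = 0, chi 1 = 1 and chi
  is multiplicative (then chi restricted to nonzero elements is a homomorphism into C^x).\<close>
definition mult_char :: "('a::field \<Rightarrow> complex) \<Rightarrow> bool" where
  "mult_char \<chi> \<longleftrightarrow> \<chi> 0 = 0 \<and> \<chi> 1 = 1 \<and> (\<forall>x y. \<chi> (x * y) = \<chi> x * \<chi> y)"

definition triv_char :: "'a::field \<Rightarrow> complex" where
  "triv_char x = (if x = 0 then 0 else 1)"

text \<open>Conjugate (= inverse) character.\<close>
definition conj_char :: "('a \<Rightarrow> complex) \<Rightarrow> 'a \<Rightarrow> complex" where
  "conj_char \<chi> x = cnj (\<chi> x)"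

definition mul_char :: "('a \<Rightarrow> complex) \<Rightarrow> ('a \<Rightarrow> complex) \<Rightarrow> 'a \<Rightarrow> complex" where
  "mul_char \<chi> \<psi> x = \<chi> x * \<psi> x"

definition jacobi :: "('a::{field,finite} \<Rightarrow> complex) \<Rightarrow> ('a \<Rightarrow> complex) \<Rightarrow> complex" where
  "jacobi A B = (\<Sum>x\<in>UNIV. A x * B (1 - x))"

definition P21 :: "('a::{field,finite} \<Rightarrow> complex) \<Rightarrow> ('a \<Rightarrow> complex) \<Rightarrow> ('a \<Rightarrow> complex) \<Rightarrow> 'a \<Rightarrow> complex" where
  "P21 A B C lam = (\<Sum>y\<in>UNIV. B y * mul_char (conj_char B) C (1 - y) * conj_char A (1 - lam * y))"

definition F21 :: "('a::{field,finite} \<Rightarrow> complex) \<Rightarrow> ('a \<Rightarrow> complex) \<Rightarrow> ('a \<Rightarrow> complex) \<Rightarrow> 'a \<Rightarrow> complex" where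
  "F21 A B C lam = P21 A B C lam / jacobi B (mul_char C (conj_char B))"

end

theory Submission
  imports Defs
begin

text \<open>Write \<open>X\<^sup>*\<close> for the conjugate character and \<open>P[A,B;C;\<lambda>]\<close> for the period function.
  Substituting \<open>y \<mapsto> 1/y\<close> in the period sum gives
  \<open>P[A,B;C;\<lambda>] = ABC(-1) A\<^sup>*(\<lambda>) P[A,AC\<^sup>*;AB\<^sup>*;1/\<lambda>]\<close>. Moreover, with \<open>D = A\<^sup>*B\<^sup>*C\<close>, summing
  the double sum \<open>\<Sum>\<^sub>u\<^sub>,\<^sub>y A(u) B(y) D(1 - u - y + \<lambda>uy)\<close>, which is symmetric in \<open>A\<close> and \<open>B\<close>,
  over the inner variable gives \<open>J(A,D) P[A,B;C;\<lambda>] = J(B,D) P[B,A;C;\<lambda>]\<close>; at \<open>\<lambda> = 0\<close> the same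
  sum relates the Jacobi sums, and together \<open>P[A,B;C;\<lambda>] J(A,A\<^sup>*C) = J(B,B\<^sup>*C) P[B,A;C;\<lambda>]\<close>.
  Writing \<open>2P = P + P\<close> and inverting one copy directly and the other after this swap yields the
  identity for \<open>P\<close>; the one for \<open>F\<close> follows by dividing by Jacobi sums, which never vanish
  (\<open>|J(X,Y)|\<^sup>2 = q\<close> in the generic case).\<close>

lemma mult_char_mult: "mult_char X \<Longrightarrow> X (x * y) = X x * X y"
  by (simp add: mult_char_def)

lemma mult_char_0 [simp]: "mult_char X \<Longrightarrow> X 0 = 0"
  by (simp add: mult_char_def)

lemma mult_char_1 [simp]: "mult_char X \<Longrightarrow> X 1 = 1"
  by (simp add: mult_char_def)

lemma mult_char_inverse:
  assumes "mult_char X" shows "X (inverse x) = inverse (X x)"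
proof (cases "x = 0")
  case False
  then have "X (inverse x) * X x = 1"
    using assms mult_char_mult[OF assms, of "inverse x" x] by simp
  then show ?thesis by (metis inverse_unique mult.commute)
qed (use assms in simp)

lemma mult_char_nonzero: "mult_char X \<Longrightarrow> x \<noteq> 0 \<Longrightarrow> X x \<noteq> 0"
  using mult_char_inverse[of X x] mult_char_mult[of X x "inverse x"] by auto

lemma mult_char_power: "mult_char X \<Longrightarrow> X (x ^ n) = X x ^ n"
  by (induction n) (simp_all add: mult_char_mult)

lemma mult_char_minus_1_squared: "mult_char X \<Longrightarrow> X (-1) * X (-1) = 1"
  using mult_char_mult[of X "-1" "-1"] by simp

lemma finite_field_power_eq_1:
  fixes x :: "'a::{field,finite}"
  assumes "x \<noteq> 0" shows "\<exists>k>0. x ^ k = 1"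
proof -
  have "\<not> inj (\<lambda>n::nat. x ^ n)"
    using finite_imageD[of "\<lambda>n::nat. x ^ n" UNIV] by auto
  then obtain m n where "x ^ m = x ^ n" "m \<noteq> n" unfolding inj_def by blast
  then obtain m n where "x ^ m = x ^ n" "m < n"
    by (cases m n rule: linorder_cases) (auto dest: sym)
  then show ?thesis
    using power_diff[OF assms, of m n] assms by (intro exI[of _ "n - m"]) simp
qed

lemma norm_mult_char:
  fixes X :: "'a::{field,finite} \<Rightarrow> complex"
  assumes "mult_char X" "x \<noteq> 0" shows "norm (X x) = 1"
proof -
  obtain k where "k > 0" "x ^ k = 1" using finite_field_power_eq_1[OF assms(2)] by blast
  then show ?thesis using mult_char_power[OF assms(1), of x k] assms(1) power_eq_1_iff by force
qed

lemma conj_char_apply: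
  fixes X :: "'a::{field,finite} \<Rightarrow> complex"
  assumes "mult_char X" shows "conj_char X x = inverse (X x)"
proof (cases "x = 0")
  case False
  then have "X x * cnj (X x) = 1"
    using complex_norm_square[of "X x"] norm_mult_char[OF assms] by simp
  then show ?thesis unfolding conj_char_def by (metis inverse_unique)
qed (use assms in \<open>simp add: conj_char_def\<close>)

lemma mult_char_mul_char: "mult_char X \<Longrightarrow> mult_char Y \<Longrightarrow> mult_char (mul_char X Y)"
  unfolding mult_char_def mul_char_def by (simp add: mult_ac)

lemma mult_char_conj_char: "mult_char X \<Longrightarrow> mult_char (conj_char X)"
  unfolding mult_char_def conj_char_def by simp

lemma conj_char_conj_char [simp]: "conj_char (conj_char X) = X"
  by (simp add: fun_eq_iff conj_char_def)

lemma conj_char_eq_triv_iff: "conj_char X = triv_char \<longleftrightarrow> X = triv_char"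
proof -
  have "conj_char triv_char = triv_char" by (simp add: fun_eq_iff conj_char_def triv_char_def)
  then show ?thesis by (metis conj_char_conj_char)
qed

lemma mul_char_commute: "mul_char X Y = mul_char Y X"
  by (simp add: fun_eq_iff mul_char_def mult.commute)

lemma mul_char_left_commute: "mul_char X (mul_char Y Z) = mul_char Y (mul_char X Z)"
  by (simp add: fun_eq_iff mul_char_def mult.left_commute)

lemma mul_char_conj_char_cancel:
  fixes X :: "'a::{field,finite} \<Rightarrow> complex"
  assumes X: "mult_char X" and Y: "mult_char Y"
  shows "mul_char X (mul_char (conj_char X) Y) = Y"
proof
  fix x show "mul_char X (mul_char (conj_char X) Y) x = Y x"
    using mult_char_nonzero[OF X, of x] Y
    by (cases "x = 0") (simp_all add: mul_char_def conj_char_apply[OF X])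
qed

lemma mul_char_conj_char_eq_triv_iff:
  fixes X Y :: "'a::{field,finite} \<Rightarrow> complex"
  assumes X: "mult_char X" and Y: "mult_char Y"
  shows "mul_char (conj_char X) Y = triv_char \<longleftrightarrow> X = Y"
proof -
  have "inverse (X x) * Y x = triv_char x \<longleftrightarrow> X x = Y x" for x
  proof (cases "x = 0")
    case False
    then have "X x \<noteq> 0" using mult_char_nonzero[OF X] by blast
    then show ?thesis using False by (auto simp: triv_char_def field_simps)
  qed (use X Y in \<open>simp add: triv_char_def\<close>)
  then show ?thesis by (simp add: fun_eq_iff mul_char_def conj_char_apply[OF X])
qed

lemma mul_char_conj_char_cancel_common:
  fixes A B C :: "'a::{field,finite} \<Rightarrow> complex"
  assumes A: "mult_char A" and B: "mult_char B" and C: "mult_char C"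
  shows "mul_char (conj_char (mul_char A (conj_char C))) (mul_char A (conj_char B))
       = mul_char (conj_char B) C"
proof -
  have "mul_char (conj_char (mul_char A (conj_char C))) (mul_char A (conj_char B))
      = mul_char A (mul_char (conj_char A) (mul_char (conj_char B) C))"
    by (simp add: fun_eq_iff mul_char_def conj_char_def mult_ac)
  then show ?thesis
    by (simp add: mul_char_conj_char_cancel A B C mult_char_mul_char mult_char_conj_char)
qed

lemma mult_char_nontrivial_witness:
  assumes "mult_char X" "X \<noteq> triv_char" obtains a where "a \<noteq> 0" "X a \<noteq> 1"
proof -
  have "\<exists>a. a \<noteq> 0 \<and> X a \<noteq> 1"
  proof (rule ccontr)
    assume "\<nexists>a. a \<noteq> 0 \<and> X a \<noteq> 1"
    then have "X = triv_char" using assms(1) by (auto simp: fun_eq_iff triv_char_def)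
    then show False using assms(2) by simp
  qed
  then show ?thesis using that by blast
qed

lemma sum_UNIV_reindex:
  fixes g :: "'a::finite \<Rightarrow> 'a"
  assumes "inj g" shows "(\<Sum>x\<in>UNIV. f (g x)) = (\<Sum>x\<in>UNIV. f x)"
  using sum.reindex[OF assms, of f] assms by (simp add: finite_UNIV_inj_surj)

lemma sum_UNIV_scale:
  fixes c :: "'a::{field,finite}"
  assumes "c \<noteq> 0" shows "(\<Sum>x\<in>UNIV. f (c * x)) = (\<Sum>x\<in>UNIV. f x)"
  using assms by (intro sum_UNIV_reindex) (simp add: inj_def)

lemma sum_mult_char_eq_0:
  fixes X :: "'a::{field,finite} \<Rightarrow> complex"
  assumes X: "mult_char X" and "X \<noteq> triv_char" shows "(\<Sum>x\<in>UNIV. X x) = 0"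
proof -
  obtain a where a: "a \<noteq> 0" "X a \<noteq> 1" using mult_char_nontrivial_witness assms by blast
  have "(\<Sum>x\<in>UNIV. X x) = (\<Sum>x\<in>UNIV. X (a * x))" using sum_UNIV_scale[OF a(1), of X] by simp
  also have "\<dots> = X a * (\<Sum>x\<in>UNIV. X x)" by (simp add: mult_char_mult[OF X] sum_distrib_left)
  finally have "(1 - X a) * (\<Sum>x\<in>UNIV. X x) = 0" by (simp add: algebra_simps)
  then show ?thesis using a(2) by simp
qed

lemma jacobi_commute: "jacobi X Y = jacobi Y X"
proof -
  have "jacobi X Y = (\<Sum>x\<in>UNIV. X (1 - x) * Y (1 - (1 - x)))"
    unfolding jacobi_def by (rule sum_UNIV_reindex[symmetric]) (simp add: inj_def)
  then show ?thesis unfolding jacobi_def by (simp add: mult.commute)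
qed

text \<open>For \<open>r = 0\<close> both sides vanish, the right one because \<open>A 0 = 0\<close> and \<open>x / 0 = 0\<close>.\<close>
lemma sum_mult_char_affine:
  fixes A D :: "'a::{field,finite} \<Rightarrow> complex"
  assumes A: "mult_char A" and D: "mult_char D"
    and "A \<noteq> triv_char" "mul_char A D \<noteq> triv_char"
  shows "(\<Sum>u\<in>UNIV. A u * D (w - r * u)) = jacobi A D * A w * D w / A r"
proof (cases "r = 0")
  case True
  have "(\<Sum>u\<in>UNIV. A u * D (w - r * u)) = D w * (\<Sum>u\<in>UNIV. A u)"
    using True by (simp add: sum_distrib_left mult.commute)
  then show ?thesis using True A sum_mult_char_eq_0[OF A assms(3)] by simp
next
  case r: False
  show ?thesis
  proof (cases "w = 0")
    case True
    have "(\<Sum>u\<in>UNIV. A u * D (w - r * u)) = D (- r) * (\<Sum>u\<in>UNIV. mul_char A D u)"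
      using True by (simp add: sum_distrib_left mult_char_mult[OF D, symmetric] mul_char_def mult_ac)
    then show ?thesis
      using True A sum_mult_char_eq_0[OF mult_char_mul_char[OF A D] assms(4)] by simp
  next
    case False
    with r have "w / r \<noteq> 0" by simp
    then have "(\<Sum>u\<in>UNIV. A u * D (w - r * u)) = (\<Sum>v\<in>UNIV. A (w / r * v) * D (w - r * (w / r * v)))"
      using sum_UNIV_scale[of "w / r" "\<lambda>u. A u * D (w - r * u)"] by simp
    also have "\<dots> = (\<Sum>v\<in>UNIV. A w * D w / A r * (A v * D (1 - v)))"
    proof (intro sum.cong refl)
      fix v
      have "w / r * v = w * inverse r * v" "w - r * (w / r * v) = w * (1 - v)"
        using r False by (simp_all add: field_simps)
      then show "A (w / r * v) * D (w - r * (w / r * v)) = A w * D w / A r * (A v * D (1 - v))"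
        by (simp add: mult_char_mult[OF A] mult_char_mult[OF D] mult_char_inverse[OF A]
            divide_inverse mult_ac)
    qed
    also have "\<dots> = jacobi A D * A w * D w / A r"
      unfolding jacobi_def by (simp add: sum_distrib_left sum_divide_distrib mult_ac)
    finally show ?thesis .
  qed
qed

lemma double_sum_mult_char:
  fixes A B D :: "'a::{field,finite} \<Rightarrow> complex"
  assumes "mult_char A" "mult_char D" "A \<noteq> triv_char" "mul_char A D \<noteq> triv_char"
  shows "(\<Sum>u\<in>UNIV. \<Sum>y\<in>UNIV. A u * B y * D (1 - u - y + lam * u * y))
       = jacobi A D * (\<Sum>y\<in>UNIV. B y * mul_char A D (1 - y) / A (1 - lam * y))"
proof -
  have "(\<Sum>u\<in>UNIV. \<Sum>y\<in>UNIV. A u * B y * D (1 - u - y + lam * u * y))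
      = (\<Sum>y\<in>UNIV. \<Sum>u\<in>UNIV. A u * B y * D (1 - u - y + lam * u * y))"
    by (rule sum.swap)
  also have "\<dots> = (\<Sum>y\<in>UNIV. B y * (\<Sum>u\<in>UNIV. A u * D ((1 - y) - (1 - lam * y) * u)))"
  proof (intro sum.cong refl)
    fix y
    have affine: "1 - u - y + lam * u * y = (1 - y) - (1 - lam * y) * u" for u
      by (simp add: algebra_simps)
    show "(\<Sum>u\<in>UNIV. A u * B y * D (1 - u - y + lam * u * y))
        = B y * (\<Sum>u\<in>UNIV. A u * D ((1 - y) - (1 - lam * y) * u))"
      unfolding affine by (simp add: sum_distrib_left mult_ac)
  qed
  also have "\<dots> = jacobi A D * (\<Sum>y\<in>UNIV. B y * mul_char A D (1 - y) / A (1 - lam * y))"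
    unfolding sum_mult_char_affine[OF assms] by (simp add: sum_distrib_left mul_char_def mult_ac)
  finally show ?thesis .
qed

lemma double_sum_mult_char_commute:
  fixes A B D :: "'a::{field,finite} \<Rightarrow> complex"
  shows
  "(\<Sum>u\<in>UNIV. \<Sum>y\<in>UNIV. A u * B y * D (1 - u - y + lam * u * y))
 = (\<Sum>u\<in>UNIV. \<Sum>y\<in>UNIV. B u * A y * D (1 - u - y + lam * u * y))"
proof -
  have "1 - y - u + lam * y * u = 1 - u - y + lam * u * y" for u y :: 'a
    by (simp add: algebra_simps)
  then show ?thesis
    by (subst sum.swap) (intro sum.cong refl, metis mult.commute)
qed

lemma jacobi_mul_char_swap:
  fixes A B D :: "'a::{field,finite} \<Rightarrow> complex"
  assumes "mult_char A" "mult_char B" "mult_char D" "A \<noteq> triv_char" "B \<noteq> triv_char"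
    "mul_char A D \<noteq> triv_char" "mul_char B D \<noteq> triv_char"
  shows "jacobi B D * jacobi A (mul_char B D) = jacobi A D * jacobi B (mul_char A D)"
  using double_sum_mult_char[of A D B 0] double_sum_mult_char[of B D A 0]
    double_sum_mult_char_commute[of A B D 0] assms
  by (simp add: jacobi_def)

lemma inj_fractional_linear:
  fixes u :: "'a::field"
  assumes "u \<noteq> 1" shows "inj (\<lambda>y. if y = 1 then u else (1 - u * y) / (1 - y))"
proof (rule injI)
  fix a b
  assume eq: "(if a = 1 then u else (1 - u * a) / (1 - a)) = (if b = 1 then u else (1 - u * b) / (1 - b))"
  have ne: "u \<noteq> (1 - u * c) / (1 - c)" if "c \<noteq> 1" for c
  proof
    assume "u = (1 - u * c) / (1 - c)"
    then have "1 - u * c = u * (1 - c)" using that by (simp add: field_simps)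
    then show False using assms by (simp add: algebra_simps)
  qed
  show "a = b"
  proof (cases "a = 1 \<or> b = 1")
    case False
    then have "(1 - u * a) * (1 - b) = (1 - u * b) * (1 - a)" using eq by (simp add: field_simps)
    then have "(a - b) * (1 - u) = 0" by (simp add: algebra_simps)
    then show ?thesis using assms by simp
  qed (use eq ne in \<open>auto split: if_splits simp: eq_commute[of u]\<close>)
qed

lemma sum_mult_char_quotient:
  fixes Y :: "'a::{field,finite} \<Rightarrow> complex"
  assumes Y: "mult_char Y" and "Y \<noteq> triv_char"
  shows "(\<Sum>y\<in>UNIV. Y (1 - u * y) / Y (1 - y))
       = (if u = 1 then of_nat (card (UNIV :: 'a set)) - 1 else - Y u)"
proof (cases "u = 1")
  case True
  have "(\<Sum>y\<in>UNIV. Y (1 - u * y) / Y (1 - y)) = (\<Sum>y::'a\<in>UNIV. 1 - (if y = 1 then 1 else 0))"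
  proof (rule sum.cong[OF refl])
    fix y :: 'a
    show "Y (1 - u * y) / Y (1 - y) = 1 - (if y = 1 then 1 else 0)"
      using True Y mult_char_nonzero[OF Y, of "1 - y"] by auto
  qed
  then show ?thesis using True by (simp add: sum_subtractf)
next
  case False
  define g where "g y = (if y = 1 then u else (1 - u * y) / (1 - y))" for y
  have "(\<Sum>y\<in>UNIV. Y (1 - u * y) / Y (1 - y)) = (\<Sum>y\<in>UNIV. Y (g y) - (if y = 1 then Y u else 0))"
    using Y by (intro sum.cong refl)
      (auto simp: g_def divide_inverse mult_char_mult[OF Y] mult_char_inverse[OF Y])
  also have "\<dots> = (\<Sum>y\<in>UNIV. Y (g y)) - Y u" by (simp add: sum_subtractf)
  also have "(\<Sum>y\<in>UNIV. Y (g y)) = 0"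
    using sum_UNIV_reindex[of g Y] inj_fractional_linear[OF False] sum_mult_char_eq_0[OF assms]
    unfolding g_def by simp
  finally show ?thesis using False by simp
qed

lemma jacobi_times_cnj:
  fixes X Y :: "'a::{field,finite} \<Rightarrow> complex"
  assumes X: "mult_char X" and Y: "mult_char Y"
    and "X \<noteq> triv_char" "Y \<noteq> triv_char" "mul_char X Y \<noteq> triv_char"
  shows "jacobi X Y * cnj (jacobi X Y) = of_nat (card (UNIV :: 'a set))"
proof -
  have sum_X: "(\<Sum>x\<in>UNIV. X x) = 0" and sum_XY: "(\<Sum>x\<in>UNIV. X x * Y x) = 0"
    using sum_mult_char_eq_0[OF X] sum_mult_char_eq_0[OF mult_char_mul_char[OF X Y]] assms(3,5)
    by (simp_all add: mul_char_def)
  have cnj_char: "cnj (Z x) = inverse (Z x)" if "mult_char Z" for Z :: "'a \<Rightarrow> complex" and x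
    using conj_char_apply[OF that] by (simp add: conj_char_def)
  have "jacobi X Y * cnj (jacobi X Y)
      = (\<Sum>y\<in>UNIV. \<Sum>x\<in>UNIV. X x * Y (1 - x) / (X y * Y (1 - y)))"
    unfolding jacobi_def by (subst sum.swap) (simp add: sum_product cnj_char X Y divide_inverse)
  also have "\<dots> = (\<Sum>y\<in>UNIV. \<Sum>u\<in>UNIV. X u * (Y (1 - y * u) / Y (1 - y)))"
  proof (rule sum.cong[OF refl])
    fix y
    show "(\<Sum>x\<in>UNIV. X x * Y (1 - x) / (X y * Y (1 - y))) = (\<Sum>u\<in>UNIV. X u * (Y (1 - y * u) / Y (1 - y)))"
    proof (cases "y = 0")
      case True then show ?thesis using X Y sum_X by (simp add: sum_distrib_right[symmetric])
    next
      case False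
      then have "(\<Sum>x\<in>UNIV. X x * Y (1 - x) / (X y * Y (1 - y)))
          = (\<Sum>u\<in>UNIV. X (y * u) * Y (1 - y * u) / (X y * Y (1 - y)))"
        using sum_UNIV_scale[of y "\<lambda>x. X x * Y (1 - x) / (X y * Y (1 - y))"] by simp
      also have "\<dots> = (\<Sum>u\<in>UNIV. X u * (Y (1 - y * u) / Y (1 - y)))"
        using mult_char_nonzero[OF X False] by (intro sum.cong refl) (simp add: mult_char_mult[OF X])
      finally show ?thesis .
    qed
  qed
  also have "\<dots> = (\<Sum>u\<in>UNIV. X u * (\<Sum>y\<in>UNIV. Y (1 - u * y) / Y (1 - y)))"
    by (subst sum.swap) (simp add: sum_distrib_left mult.commute)
  also have "\<dots> = (\<Sum>u\<in>UNIV. (if u = 1 then of_nat (card (UNIV :: 'a set)) else 0) - X u * Y u)"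
    using X Y by (intro sum.cong refl) (simp add: sum_mult_char_quotient[OF Y assms(4)])
  also have "\<dots> = of_nat (card (UNIV :: 'a set))" using sum_XY by (simp add: sum_subtractf)
  finally show ?thesis .
qed

lemma jacobi_triv_char_right:
  fixes X :: "'a::{field,finite} \<Rightarrow> complex"
  assumes X: "mult_char X" and "X \<noteq> triv_char" shows "jacobi X triv_char = -1"
proof -
  have "jacobi X triv_char = (\<Sum>x\<in>UNIV. X x - (if x = 1 then 1 else 0))"
    unfolding jacobi_def triv_char_def using X by (intro sum.cong refl) auto
  then show ?thesis using sum_mult_char_eq_0[OF assms] by (simp add: sum_subtractf)
qed

lemma jacobi_conj_char_right:
  fixes X :: "'a::{field,finite} \<Rightarrow> complex"
  assumes X: "mult_char X" and "X \<noteq> triv_char" shows "jacobi X (conj_char X) = - X (-1)"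
proof -
  have "jacobi X (conj_char X)
      = (\<Sum>x\<in>UNIV. inverse (X (inverse x - 1)) - (if x = 0 then inverse (X (-1)) else 0))"
    unfolding jacobi_def conj_char_apply[OF X]
  proof (intro sum.cong refl)
    fix x
    show "X x * inverse (X (1 - x)) = inverse (X (inverse x - 1)) - (if x = 0 then inverse (X (-1)) else 0)"
    proof (cases "x = 0")
      case False
      then have "inverse x - 1 = (1 - x) * inverse x" by (simp add: field_simps)
      then show ?thesis using False by (simp add: mult_char_mult[OF X] mult_char_inverse[OF X])
    qed (use X in simp)
  qed
  also have "\<dots> = (\<Sum>x\<in>UNIV. inverse (X (inverse x - 1))) - inverse (X (-1))"
    by (simp add: sum_subtractf)
  also have "(\<Sum>x\<in>UNIV. inverse (X (inverse x - 1))) = (\<Sum>x\<in>UNIV. inverse (X x))"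
    by (rule sum_UNIV_reindex[of "\<lambda>x. inverse x - 1" "\<lambda>z. inverse (X z)"]) (auto simp: inj_def)
  also have "\<dots> = 0"
  proof -
    have "conj_char X \<noteq> triv_char" using assms(2) by (simp add: conj_char_eq_triv_iff)
    then show ?thesis using sum_mult_char_eq_0[OF mult_char_conj_char[OF X]] by (simp add: conj_char_apply[OF X])
  qed
  finally show ?thesis
    using mult_char_minus_1_squared[OF X] by (simp add: inverse_unique)
qed

lemma jacobi_nonzero:
  fixes X Y :: "'a::{field,finite} \<Rightarrow> complex"
  assumes X: "mult_char X" and Y: "mult_char Y" and "X \<noteq> triv_char"
  shows "jacobi X Y \<noteq> 0"
proof -
  consider "Y = triv_char" | "Y = conj_char X" | "Y \<noteq> triv_char" "mul_char X Y \<noteq> triv_char"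
    using mul_char_conj_char_eq_triv_iff[OF mult_char_conj_char[OF X] Y] by auto
  then show ?thesis
  proof cases
    case 3
    then have "jacobi X Y * cnj (jacobi X Y) \<noteq> 0" by (simp add: jacobi_times_cnj assms)
    then show ?thesis by auto
  qed (simp_all add: assms jacobi_triv_char_right jacobi_conj_char_right mult_char_nonzero)
qed

lemma P21_altdef:
  fixes A B C :: "'a::{field,finite} \<Rightarrow> complex"
  assumes "mult_char A"
  shows "P21 A B C lam = (\<Sum>y\<in>UNIV. B y * mul_char (conj_char B) C (1 - y) / A (1 - lam * y))"
  unfolding P21_def conj_char_apply[OF assms] divide_inverse ..

lemma P21_swap:
  fixes A B C :: "'a::{field,finite} \<Rightarrow> complex"
  assumes A: "mult_char A" and B: "mult_char B" and C: "mult_char C"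
    and "A \<noteq> triv_char" "B \<noteq> triv_char" "A \<noteq> C" "B \<noteq> C"
  shows "P21 A B C lam * jacobi A (mul_char (conj_char A) C)
       = jacobi B (mul_char (conj_char B) C) * P21 B A C lam"
proof -
  define D where "D = mul_char (conj_char A) (mul_char (conj_char B) C)"
  have D: "mult_char D" unfolding D_def
    by (intro mult_char_mul_char mult_char_conj_char A B C)
  have AD: "mul_char A D = mul_char (conj_char B) C"
    unfolding D_def by (intro mul_char_conj_char_cancel A mult_char_mul_char mult_char_conj_char B C)
  have BD: "mul_char B D = mul_char (conj_char A) C"
    unfolding D_def mul_char_left_commute[of "conj_char A"]
    by (intro mul_char_conj_char_cancel B mult_char_mul_char mult_char_conj_char A C)
  have nontriv: "mul_char A D \<noteq> triv_char" "mul_char B D \<noteq> triv_char"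
    unfolding AD BD using assms by (simp_all add: mul_char_conj_char_eq_triv_iff)
  have double_sum: "jacobi A D * P21 A B C lam = jacobi B D * P21 B A C lam"
    using double_sum_mult_char[OF A D assms(4) nontriv(1), of B lam]
      double_sum_mult_char[OF B D assms(5) nontriv(2), of A lam]
      double_sum_mult_char_commute[of A B D lam]
    unfolding P21_altdef[OF A] P21_altdef[OF B] AD BD by simp
  have jacobi_swap: "jacobi B D * jacobi A (mul_char (conj_char A) C)
      = jacobi A D * jacobi B (mul_char (conj_char B) C)"
    using jacobi_mul_char_swap[OF A B D assms(4,5) nontriv] unfolding AD BD .
  have "jacobi B D * (P21 A B C lam * jacobi A (mul_char (conj_char A) C))
      = jacobi B D * (jacobi B (mul_char (conj_char B) C) * P21 B A C lam)"
    using double_sum jacobi_swap by algebra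
  then show ?thesis using jacobi_nonzero[OF B D assms(5)] by simp
qed

lemma P21_inversion:
  fixes A B C :: "'a::{field,finite} \<Rightarrow> complex"
  assumes A: "mult_char A" and B: "mult_char B" and C: "mult_char C" and lam: "lam \<noteq> 0"
  shows "P21 A B C lam = A (-1) * B (-1) * C (-1) * conj_char A lam
           * P21 A (mul_char A (conj_char C)) (mul_char A (conj_char B)) (inverse lam)"
proof -
  have "P21 A (mul_char A (conj_char C)) (mul_char A (conj_char B)) (inverse lam)
      = (\<Sum>t\<in>UNIV. mul_char A (conj_char C) t * mul_char (conj_char B) C (1 - t)
           * conj_char A (1 - inverse lam * t))"
    unfolding P21_def mul_char_conj_char_cancel_common[OF A B C] ..
  also have "\<dots> = (\<Sum>y\<in>UNIV. mul_char A (conj_char C) (inverse y) * mul_char (conj_char B) C (1 - inverse y)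
           * conj_char A (1 - inverse lam * inverse y))"
    by (rule sum_UNIV_reindex[symmetric]) (simp add: inj_def)
  finally have inverted: "P21 A (mul_char A (conj_char C)) (mul_char A (conj_char B)) (inverse lam) = \<dots>" .
  have sign: "inverse (X (-1)) = X (-1)" if "mult_char X" for X :: "'a \<Rightarrow> complex"
    using mult_char_minus_1_squared[OF that] by (simp add: inverse_unique)
  show ?thesis
    unfolding inverted unfolding P21_def sum_distrib_left
  proof (intro sum.cong refl)
    fix y :: 'a
    show "B y * mul_char (conj_char B) C (1 - y) * conj_char A (1 - lam * y)
        = A (-1) * B (-1) * C (-1) * conj_char A lam
          * (mul_char A (conj_char C) (inverse y) * mul_char (conj_char B) C (1 - inverse y)
             * conj_char A (1 - inverse lam * inverse y))"
    proof (cases "y = 0")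
      case False
      have shift: "1 - inverse y = (-1) * (1 - y) * inverse y"
        "1 - inverse lam * inverse y = (-1) * (1 - lam * y) * inverse lam * inverse y"
        using False lam by (simp_all add: field_simps)
      have "A y \<noteq> 0" "C y \<noteq> 0" "A lam \<noteq> 0"
        using mult_char_nonzero A C False lam by auto
      then show ?thesis
        unfolding shift mul_char_def conj_char_apply[OF A] conj_char_apply[OF B] conj_char_apply[OF C]
          mult_char_mult[OF A] mult_char_mult[OF B] mult_char_mult[OF C]
          mult_char_inverse[OF A] mult_char_inverse[OF B] mult_char_inverse[OF C]
          inverse_mult_distrib sign[OF A] sign[OF B] sign[OF C]
        using mult_char_minus_1_squared[OF A] mult_char_minus_1_squared[OF B]
          mult_char_minus_1_squared[OF C]
        by (simp add: field_simps)
    qed (use B A in \<open>simp add: mul_char_def\<close>)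
  qed
qed

lemma P21_two_term:
  fixes A B C :: "'a::{field,finite} \<Rightarrow> complex"
  assumes A: "mult_char A" and B: "mult_char B" and C: "mult_char C"
    and "A \<noteq> triv_char" "B \<noteq> triv_char" "A \<noteq> C" "B \<noteq> C" and lam: "lam \<noteq> 0"
  shows "2 * P21 A B C lam =
           A (-1) * B (-1) * C (-1) * conj_char A lam
             * P21 A (mul_char A (conj_char C)) (mul_char A (conj_char B)) (inverse lam)
         + A (-1) * B (-1) * C (-1) * conj_char B lam
             * (jacobi B (mul_char (conj_char B) C) / jacobi A (mul_char (conj_char A) C))
             * P21 B (mul_char B (conj_char C)) (mul_char B (conj_char A)) (inverse lam)"
proof -
  have "jacobi A (mul_char (conj_char A) C) \<noteq> 0"
    using jacobi_nonzero A C assms(4) mult_char_mul_char mult_char_conj_char by blast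
  then have swap: "P21 A B C lam = jacobi B (mul_char (conj_char B) C) / jacobi A (mul_char (conj_char A) C)
      * P21 B A C lam"
    using P21_swap[OF assms(1-7)] by (simp add: field_simps)
  have "2 * P21 A B C lam = P21 A B C lam + P21 A B C lam" by simp
  also have "\<dots> = A (-1) * B (-1) * C (-1) * conj_char A lam
             * P21 A (mul_char A (conj_char C)) (mul_char A (conj_char B)) (inverse lam)
         + jacobi B (mul_char (conj_char B) C) / jacobi A (mul_char (conj_char A) C)
             * (B (-1) * A (-1) * C (-1) * conj_char B lam
             * P21 B (mul_char B (conj_char C)) (mul_char B (conj_char A)) (inverse lam))"
    unfolding P21_inversion[OF A B C lam, symmetric] P21_inversion[OF B A C lam, symmetric] swap ..
  finally show ?thesis by (simp add: mult_ac)
qed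

lemma F21_inverted_eq:
  fixes A B C :: "'a::{field,finite} \<Rightarrow> complex"
  assumes "mult_char A" "mult_char B" "mult_char C"
  shows "F21 A (mul_char A (conj_char C)) (mul_char A (conj_char B)) lam
       = P21 A (mul_char A (conj_char C)) (mul_char A (conj_char B)) lam
         / jacobi (mul_char (conj_char C) A) (mul_char (conj_char B) C)"
proof -
  have "mul_char (mul_char A (conj_char B)) (conj_char (mul_char A (conj_char C)))
      = mul_char (conj_char B) C"
    using mul_char_conj_char_cancel_common[OF assms] by (simp add: mul_char_commute)
  then show ?thesis unfolding F21_def mul_char_commute[of "conj_char C" A] by simp
qed

theorem mainTheorem4:
  fixes A B C :: "'a::{field,finite} \<Rightarrow> complex" and lam :: 'a
  assumes q_odd: "odd (card (UNIV :: 'a set))"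
    and chars: "mult_char A" "mult_char B" "mult_char C"
    and "A \<noteq> triv_char" "B \<noteq> triv_char" "A \<noteq> C" "B \<noteq> C"
    and "lam \<noteq> 0"
  shows "(2 * P21 A B C lam =
           A (-1) * B (-1) * C (-1) * conj_char A lam
             * P21 A (mul_char A (conj_char C)) (mul_char A (conj_char B)) (inverse lam)
         + A (-1) * B (-1) * C (-1) * conj_char B lam
             * (jacobi B (mul_char (conj_char B) C) / jacobi A (mul_char (conj_char A) C))
             * P21 B (mul_char B (conj_char C)) (mul_char B (conj_char A)) (inverse lam)) \<and>
         (2 * F21 A B C lam =
           A (-1) * B (-1) * C (-1) * conj_char A lam
             * (jacobi (mul_char (conj_char C) A) (mul_char (conj_char B) C) / jacobi B (mul_char C (conj_char B)))
             * F21 A (mul_char A (conj_char C)) (mul_char A (conj_char B)) (inverse lam)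
         + A (-1) * B (-1) * C (-1) * conj_char B lam
             * (jacobi (mul_char C (conj_char A)) (mul_char (conj_char C) B) / jacobi A (mul_char (conj_char A) C))
             * F21 B (mul_char B (conj_char C)) (mul_char B (conj_char A)) (inverse lam))"
proof -
  have "jacobi A (mul_char (conj_char A) C) \<noteq> 0" "jacobi B (mul_char (conj_char B) C) \<noteq> 0"
    "jacobi (mul_char (conj_char C) A) (mul_char (conj_char B) C) \<noteq> 0"
    "jacobi (mul_char (conj_char C) B) (mul_char (conj_char A) C) \<noteq> 0"
    using assms jacobi_nonzero mult_char_mul_char mult_char_conj_char mul_char_conj_char_eq_triv_iff
    by metis+
  with P21_two_term[OF assms(2-9)] show ?thesis
    unfolding F21_def[of A B C] F21_inverted_eq[OF chars] F21_inverted_eq[OF chars(2,1,3)]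
      jacobi_commute[of "mul_char (conj_char C) B"] mul_char_commute[of C "conj_char A"]
      mul_char_commute[of C "conj_char B"]
    by (simp add: field_simps)
qed

end
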